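(* Let $M(t)\subset\mathbb{R}^2$, $t\ge0$, be a smooth one-parameter family of bounded, simply connected open sets whose boundaries $\partial M(t)$ do not self-intersect, generated by the flow of a velocity field $\mathbf v$, and let $\rho(t,\cdot)>0$ be a density supported on $\bar M(t)$ with $\int_{M(t)}\rho=1$, evolving by $$\partial_t\rho=-\nabla\cdot(\rho\mathbf v)\ \text{ in }\mathring M(t),\qquad \partial_t\mathbf r=\mathbf v\ \text{ on }\partial M(t).$$ Parametrize the boundary points (boundary agents) by $\gamma\in[0,1)$, with position $\mathbf r(t,\gamma)\in\partial M(t)$, let $M^*$ be a target domain whose boundary is the closed curve $\mathbf r^*:[0,1]\to\partial M^*$, and let $\mathbf e(t,\gamma)=\mathbf r(t,\gamma)-\mathbf r^*(\gamma)$. Apply the control law $$\mathbf v=-\frac{\nabla\rho}{\rho}\ \text{ in }\mathring M(t),\qquad \partial_t\mathbf v=-\mathbf e-\mathbf v\ \text{ on }\partial M(t).$$ Assume the resulting system is well posed, that $\rho(t,\cdot)$ is sufficiently smooth and bounded in $H^1(\cup_t M(t))$, that the components of $\mathbf v$ are bounded in $H^1(\cup_t M(t))$, and that the velocity of the parametrized boundary is bounded in $H^1((0,1))$. Then, from any initial domain $M_0=M(0)$ with smooth boundary, $M(t)$ converges to $M^*$ as $t\to\infty$.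
   Context: $H^1=W^{1,2}$ denotes the Sobolev space. The boundary positions $\mathbf r(t,\gamma)$ are assumed known to the boundary agents (computed from boundary localization and integration of their velocities). *)

theory Defs
  imports "HOL-Analysis.Analysis"
begin

definition grad :: "(real^'n \<Rightarrow> real) \<Rightarrow> real^'n \<Rightarrow> real^'n" where
  "grad f x = (\<chi> i. frechet_derivative f (at x) (axis i 1))"

definition divergence :: "(real^'n \<Rightarrow> real^'n) \<Rightarrow> real^'n \<Rightarrow> real" where
  "divergence F x = (\<Sum>i\<in>UNIV. frechet_derivative F (at x) (axis i 1) $ i)"

text \<open>Squared H^1 norm integrand: |f|^2 + sum of squared first partial derivatives
  (for vector valued f this is the sum of the H^1 integrands of its components).\<close>
definition H1_integrand :: "('a::euclidean_space \<Rightarrow> 'b::euclidean_space) \<Rightarrow> 'a \<Rightarrow> real" where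
  "H1_integrand f x = (norm (f x))^2 + (\<Sum>b\<in>Basis. (norm (frechet_derivative f (at x) b))^2)"

definition H1_bounded_on :: "'a::euclidean_space set \<Rightarrow> ('a \<Rightarrow> 'b::euclidean_space) \<Rightarrow> real \<Rightarrow> bool" where
  "H1_bounded_on S f B \<longleftrightarrow>
     (\<forall>x\<in>S. f differentiable (at x)) \<and>
     (H1_integrand f) integrable_on S \<and> integral S (H1_integrand f) \<le> B"

definition smooth_curve :: "(real \<Rightarrow> 'a::real_normed_vector) \<Rightarrow> bool" where
  "smooth_curve g \<longleftrightarrow>
     (\<forall>k. \<forall>s. (((\<lambda>h y. vector_derivative h (at y)) ^^ k) g) differentiable (at s))"

text \<open>Hausdorff distance between (nonempty, bounded) sets.\<close>
definition hausdist :: "'a::metric_space set \<Rightarrow> 'a set \<Rightarrow> real" where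
  "hausdist S T = max (SUP x\<in>S. infdist x T) (SUP y\<in>T. infdist y S)"

end

theory Submission
  imports Defs "HOL-Complex_Analysis.Winding_Numbers" "HOL-Real_Asymp.Real_Asymp"
begin

text \<open>Only the boundary agents matter. The tracking error \<open>e = r - r\<^sup>*\<close> of each agent obeys
  the damped oscillator \<open>e'' = - e - e'\<close>, whose energy
  \<open>V = 3/2 |e|\<^sup>2 + e \<bullet> e' + |e'|\<^sup>2\<close> satisfies \<open>V' = - |e|\<^sup>2 - |e'|\<^sup>2 \<le> - V / 2\<close>; so \<open>e\<close> decays
  exponentially, uniformly along the boundary because the initial boundary velocity, an \<open>H\<^sup>1\<close>
  function of one variable, is bounded. If the two boundary curves are uniformly \<open>\<epsilon>\<close>-close,
  the straight-line homotopy between them avoids every point at distance \<open>> \<epsilon>\<close> from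
  \<open>closure M\<^sup>*\<close>; such a point has the same winding number (zero) about both curves and
  therefore, by the Jordan curve theorem, lies outside \<open>closure M(t)\<close>. Thus the Hausdorff
  distance of the closures is at most \<open>\<epsilon>\<close>.\<close>

lemma decay_of_differential_inequality:
  fixes V V' :: "real \<Rightarrow> real"
  assumes deriv: "\<And>s. s \<ge> 0 \<Longrightarrow> (V has_real_derivative V' s) (at s within {0..})"
    and ineq: "\<And>s. s \<ge> 0 \<Longrightarrow> V' s \<le> - c * V s"
    and "t \<ge> 0"
  shows "V t \<le> V 0 * exp (- c * t)"
proof -
  define W where "W s = V s * exp (c * s)" for s
  have dW: "(W has_real_derivative exp (c * s) * (V' s + c * V s)) (at s within {0..})"
    if "s \<ge> 0" for s
    unfolding W_def by (rule derivative_eq_intros deriv[OF that] refl | simp)+ (simp add: algebra_simps)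
  have "W t \<le> W 0"
  proof (rule DERIV_nonpos_imp_decreasing_open[OF \<open>t \<ge> 0\<close>])
    show "\<exists>y. (W has_real_derivative y) (at s) \<and> y \<le> 0" if "0 < s" "s < t" for s
    proof (intro exI conjI)
      have "at s within {0..} = at s" using that by (intro at_within_interior) auto
      then show "(W has_real_derivative exp (c * s) * (V' s + c * V s)) (at s)"
        using dW[of s] that by simp
      show "exp (c * s) * (V' s + c * V s) \<le> 0"
        using ineq[of s] that by (intro mult_nonneg_nonpos) auto
    qed
    show "continuous_on {0..t} W"
    proof (rule continuous_on_subset)
      show "continuous_on {0..} W"
        using dW by (intro continuous_on_eq_continuous_within[THEN iffD2] ballI)
          (meson atLeast_iff DERIV_continuous)
    qed auto
  qed
  then show ?thesis by (simp add: W_def exp_minus field_simps)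
qed

lemma damped_oscillator_energy_decay:
  fixes e w :: "real \<Rightarrow> 'a::real_inner"
  assumes de: "\<And>s. s \<ge> 0 \<Longrightarrow> (e has_vector_derivative w s) (at s within {0..})"
    and dw: "\<And>s. s \<ge> 0 \<Longrightarrow> (w has_vector_derivative (- e s - w s)) (at s within {0..})"
    and "t \<ge> 0"
  shows "(norm (e t))\<^sup>2 \<le> 2 * ((norm (e 0))\<^sup>2 + (norm (w 0))\<^sup>2) * exp (- t / 2)"
proof -
  define V where "V s = 3/2 * (e s \<bullet> e s) + e s \<bullet> w s + w s \<bullet> w s" for s
  have dV: "(V has_real_derivative - (e s \<bullet> e s + w s \<bullet> w s)) (at s within {0..})"
    if "s \<ge> 0" for s
  proof -
    have "(V has_derivative (\<lambda>h. 3/2 * (e s \<bullet> h *\<^sub>R w s + h *\<^sub>R w s \<bullet> e s)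
       + (e s \<bullet> h *\<^sub>R (- e s - w s) + h *\<^sub>R w s \<bullet> w s)
       + (w s \<bullet> h *\<^sub>R (- e s - w s) + h *\<^sub>R (- e s - w s) \<bullet> w s))) (at s within {0..})"
      unfolding V_def[abs_def] using de[OF that] dw[OF that]
      by (intro has_derivative_add has_derivative_mult_right has_derivative_inner)
        (simp_all add: has_vector_derivative_def)
    then show ?thesis
      unfolding has_field_derivative_def
      by (rule has_derivative_eq_rhs) (simp add: fun_eq_iff inner_commute algebra_simps)
  qed
  have AM_GM: "2 * (e s \<bullet> w s) \<le> e s \<bullet> e s + w s \<bullet> w s"
    "- 2 * (e s \<bullet> w s) \<le> e s \<bullet> e s + w s \<bullet> w s" for s
    using inner_ge_zero[of "e s - w s"] inner_ge_zero[of "e s + w s"]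
    by (simp_all add: inner_diff_right inner_diff_left inner_add_right inner_add_left inner_commute)
  have "e t \<bullet> e t \<le> V t"
    using AM_GM[of t] inner_ge_zero[of "w t"] unfolding V_def by linarith
  also have "V t \<le> V 0 * exp (- (1/2) * t)"
  proof (rule decay_of_differential_inequality[OF dV _ \<open>t \<ge> 0\<close>])
    show "- (e s \<bullet> e s + w s \<bullet> w s) \<le> - (1/2) * V s" for s
      using AM_GM[of s] inner_ge_zero[of "w s"] unfolding V_def by argo
  qed
  also have "V 0 \<le> 2 * (e 0 \<bullet> e 0 + w 0 \<bullet> w 0)"
    using AM_GM[of 0] inner_ge_zero[of "e 0"] inner_ge_zero[of "w 0"] unfolding V_def by argo
  finally show ?thesis
    by (simp add: power2_norm_eq_inner mult_right_mono)
qed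

lemma H1_integrand_real_domain:
  fixes w :: "real \<Rightarrow> 'b::euclidean_space"
  assumes "w differentiable (at x)"
  shows "H1_integrand w x = (norm (w x))\<^sup>2 + (norm (vector_derivative w (at x)))\<^sup>2"
proof -
  have "(w has_derivative (\<lambda>h. h *\<^sub>R vector_derivative w (at x))) (at x)"
    using assms vector_derivative_works has_vector_derivative_def by blast
  then have "frechet_derivative w (at x) 1 = vector_derivative w (at x)"
    by (metis frechet_derivative_at scaleR_one)
  then show ?thesis
    by (simp add: H1_integrand_def Basis_real_def)
qed

lemma norm_diff_le_H1_integral:
  fixes w :: "real \<Rightarrow> 'b::euclidean_space"
  assumes "x \<le> y" and diff: "\<And>s. s \<in> {x..y} \<Longrightarrow> w differentiable (at s)"
    and int: "H1_integrand w integrable_on {x..y}"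
  shows "norm (w y - w x) \<le> ((y - x) + integral {x..y} (H1_integrand w)) / 2"
proof -
  let ?d = "\<lambda>s. vector_derivative w (at s)"
  let ?g = "\<lambda>s. (1 + H1_integrand w s) / 2"
  have d: "(?d has_integral (w y - w x)) {x..y}"
  proof (rule fundamental_theorem_of_calculus[OF \<open>x \<le> y\<close>])
    show "(w has_vector_derivative ?d s) (at s within {x..y})" if "s \<in> {x..y}" for s
      using diff[OF that] vector_derivative_works has_vector_derivative_at_within by blast
  qed
  have g: "(?g has_integral ((y - x) + integral {x..y} (H1_integrand w)) / 2) {x..y}"
    using has_integral_divide[OF has_integral_add[OF has_integral_const_real[of 1 x y]
        integrable_integral[OF int]], of 2] \<open>x \<le> y\<close> by simp
  have bound: "norm (?d s) \<le> ?g s" if "s \<in> {x..y}" for s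
  proof -
    have "2 * norm (?d s) \<le> 1 + (norm (?d s))\<^sup>2"
      using sum_squares_bound[of 1 "norm (?d s)"] by simp
    then show ?thesis
      using H1_integrand_real_domain[OF diff[OF that]] zero_le_power2[of "norm (w s)"] by argo
  qed
  show ?thesis
    using integral_norm_bound_integral[OF has_integral_integrable[OF d]
        has_integral_integrable[OF g] bound]
    by (simp only: integral_unique[OF d] integral_unique[OF g])
qed

lemma exists_less_of_integral_less:
  fixes f :: "real \<Rightarrow> real"
  assumes "a \<le> b" "f integrable_on {a<..<b}" "integral {a<..<b} f < c * (b - a)"
  shows "\<exists>x\<in>{a<..<b}. f x < c"
proof (rule ccontr)
  assume "\<not> ?thesis"
  then have "integral {a<..<b} (\<lambda>_. c) \<le> integral {a<..<b} f"
    using assms(2) by (intro integral_le) (auto simp: not_less integrable_on_open_interval_real)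
  moreover have "integral {a<..<b} (\<lambda>_. c) = c * (b - a)"
    using assms(1) by (simp flip: integral_open_interval_real)
  ultimately show False
    using assms(3) by simp
qed

lemma H1_bounded_on_interval_imp_bounded:
  fixes w :: "real \<Rightarrow> 'b::euclidean_space"
  assumes "H1_bounded_on {a<..<b} w B"
  shows "bounded (w ` {a<..<b})"
proof (cases "a < b")
  case False
  then show ?thesis by simp
next
  case True
  let ?F = "H1_integrand w"
  have diff: "\<And>x. x \<in> {a<..<b} \<Longrightarrow> w differentiable (at x)"
    and int: "?F integrable_on {a<..<b}" and int_le: "integral {a<..<b} ?F \<le> B"
    using assms by (auto simp: H1_bounded_on_def)
  have value_le: "(norm (w x))\<^sup>2 \<le> ?F x" and F_nonneg: "0 \<le> ?F x" for x
    by (simp_all add: H1_integrand_def sum_nonneg add_increasing2)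
  have sub: "{x..y} \<subseteq> {a<..<b}" if "x \<in> {a<..<b}" "y \<in> {a<..<b}" for x y
    using that by auto
  obtain x0 where x0: "x0 \<in> {a<..<b}" "?F x0 < (B + 1) / (b - a)"
    using exists_less_of_integral_less[OF _ int, of "(B + 1) / (b - a)"] True int_le by auto
  define K where "K = sqrt ((B + 1) / (b - a)) + ((b - a) + B) / 2"
  have oscillation: "norm (w y - w x) \<le> ((b - a) + B) / 2"
    if "x \<in> {a<..<b}" "y \<in> {a<..<b}" "x \<le> y" for x y
  proof -
    have int_xy: "?F integrable_on {x..y}"
      using integrable_on_subinterval[OF int sub[OF that(1,2)]] .
    have "integral {x..y} ?F \<le> B"
      using integral_subset_le[OF sub[OF that(1,2)] int_xy int] F_nonneg int_le by simp
    moreover have "y - x \<le> b - a"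
      using that by simp
    ultimately show ?thesis
      using norm_diff_le_H1_integral[OF that(3) _ int_xy] diff sub[OF that(1,2)] by fastforce
  qed
  have "norm (w x) \<le> K" if "x \<in> {a<..<b}" for x
  proof -
    have "norm (w x - w x0) \<le> ((b - a) + B) / 2"
      using oscillation[OF that x0(1)] oscillation[OF x0(1) that]
      by (cases "x \<le> x0") (auto simp: norm_minus_commute)
    moreover have "norm (w x0) \<le> sqrt ((B + 1) / (b - a))"
      using value_le[of x0] x0(2) by (intro real_le_rsqrt) simp
    ultimately show ?thesis
      unfolding K_def using norm_triangle_sub[of "w x" "w x0"] by linarith
  qed
  then show ?thesis
    unfolding bounded_iff by blast
qed

lemma damped_tracking_uniform_convergence:
  fixes x u :: "real \<Rightarrow> 'i \<Rightarrow> 'a::real_inner" and x_ref :: "'i \<Rightarrow> 'a"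
  assumes dx: "\<And>t i. t \<ge> 0 \<Longrightarrow> i \<in> I \<Longrightarrow>
      ((\<lambda>s. x s i) has_vector_derivative u t i) (at t within {0..})"
    and du: "\<And>t i. t \<ge> 0 \<Longrightarrow> i \<in> I \<Longrightarrow>
      ((\<lambda>s. u s i) has_vector_derivative (- (x t i - x_ref i) - u t i)) (at t within {0..})"
    and x0: "bounded ((\<lambda>i. x 0 i - x_ref i) ` I)" and u0: "bounded ((\<lambda>i. u 0 i) ` I)"
  obtains \<epsilon> :: "real \<Rightarrow> real"
  where "(\<epsilon> \<longlongrightarrow> 0) at_top" "\<And>t i. t \<ge> 0 \<Longrightarrow> i \<in> I \<Longrightarrow> dist (x t i) (x_ref i) \<le> \<epsilon> t"
proof -
  obtain Kx where Kx: "\<And>i. i \<in> I \<Longrightarrow> norm (x 0 i - x_ref i) \<le> Kx"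
    using x0 by (auto simp: bounded_iff)
  obtain Ku where Ku: "\<And>i. i \<in> I \<Longrightarrow> norm (u 0 i) \<le> Ku"
    using u0 by (auto simp: bounded_iff)
  define \<epsilon> where "\<epsilon> t = sqrt (2 * (Kx\<^sup>2 + Ku\<^sup>2) * exp (- t / 2))" for t
  show thesis
  proof
    have "((\<lambda>t. 2 * (Kx\<^sup>2 + Ku\<^sup>2) * exp (- t / 2)) \<longlongrightarrow> 0) at_top"
      by (intro tendsto_mult_right_zero) real_asymp
    then show "(\<epsilon> \<longlongrightarrow> 0) at_top"
      unfolding \<epsilon>_def[abs_def] using tendsto_real_sqrt by force
  next
    fix t :: real and i assume "t \<ge> 0" "i \<in> I"
    have "(norm (x t i - x_ref i))\<^sup>2
        \<le> 2 * ((norm (x 0 i - x_ref i))\<^sup>2 + (norm (u 0 i))\<^sup>2) * exp (- t / 2)"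
    proof (rule damped_oscillator_energy_decay[OF _ _ \<open>t \<ge> 0\<close>])
      show "((\<lambda>s. x s i - x_ref i) has_vector_derivative u s i) (at s within {0..})"
        if "s \<ge> 0" for s
        using dx[OF that \<open>i \<in> I\<close>] by (rule derivative_eq_intros) auto
    qed (use du \<open>i \<in> I\<close> in auto)
    also have "\<dots> \<le> 2 * (Kx\<^sup>2 + Ku\<^sup>2) * exp (- t / 2)"
      using Kx[OF \<open>i \<in> I\<close>] Ku[OF \<open>i \<in> I\<close>]
      by (intro mult_right_mono mult_left_mono add_mono power_mono) auto
    finally show "dist (x t i) (x_ref i) \<le> \<epsilon> t"
      unfolding \<epsilon>_def dist_norm by (rule real_le_rsqrt)
  qed
qed

lemma Jordan_domain_eq_inside:
  fixes c :: "real \<Rightarrow> complex"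
  assumes c: "simple_path c" "pathfinish c = pathstart c"
    and A: "open A" "bounded A" "connected A" "frontier A = path_image c"
  shows "A = inside (path_image c)"
proof -
  let ?I = "inside (path_image c)" and ?O = "outside (path_image c)"
  have J: "connected ?I" "connected ?O" "\<not> bounded ?O" "?I \<union> ?O = - path_image c"
    "frontier ?I = path_image c"
    using Jordan_inside_outside[OF c] by auto
  have disj: "A \<inter> path_image c = {}"
    using A(1,4) by (auto simp: frontier_def interior_open)
  have "A \<noteq> {}"
    using A(4) by (auto simp: path_image_def)
  have subset_A: "K \<subseteq> A" if "connected K" "K \<inter> path_image c = {}" "K \<inter> A \<noteq> {}" for K
    using connected_Int_frontier[OF that(1), of A] that A(4) by blast
  have "A \<inter> inside (path_image c) \<noteq> {}"
  proof
    assume "A \<inter> inside (path_image c) = {}"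
    then have "?O \<inter> A \<noteq> {}"
      using J(4) disj \<open>A \<noteq> {}\<close> by blast
    then have "?O \<subseteq> A"
      using subset_A J(2,4) by blast
    then show False
      using J(3) A(2) bounded_subset by blast
  qed
  then have "A \<subseteq> ?I"
    using connected_Int_frontier[OF A(3), of ?I] J(5) disj by blast
  moreover have "?I \<subseteq> A"
    using subset_A J(1,4) \<open>A \<inter> ?I \<noteq> {}\<close> by blast
  ultimately show ?thesis by blast
qed

lemma Jordan_domains_closure_near:
  fixes c d :: "real \<Rightarrow> complex"
  assumes c: "simple_path c" "pathfinish c = pathstart c"
    and d: "simple_path d" "pathfinish d = pathstart d"
    and A: "open A" "bounded A" "connected A" "frontier A = path_image c"
    and B: "open B" "bounded B" "connected B" "frontier B = path_image d"
    and near: "\<And>s. s \<in> {0..1} \<Longrightarrow> dist (c s) (d s) \<le> \<epsilon>"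
    and x: "x \<in> closure A"
  shows "\<exists>y\<in>closure B. dist x y \<le> \<epsilon>"
proof (rule ccontr)
  assume "\<not> ?thesis"
  then have far: "\<epsilon> < dist x y" if "y \<in> closure B" for y
    using that by force
  have d_in_B: "d s \<in> closure B" if "s \<in> {0..1}" for s
    using B(4) that by (auto simp: frontier_def path_image_def)
  have "x \<notin> path_image c"
  proof
    assume "x \<in> path_image c"
    then obtain s where "s \<in> {0..1}" "x = c s"
      by (auto simp: path_image_def)
    then show False
      using far[OF d_in_B] near by (metis not_le)
  qed
  then have "x \<in> inside (path_image c)"
    using x A Jordan_domain_eq_inside[OF c A] by (auto simp: frontier_def interior_open)
  then have "winding_number c x \<noteq> 0"
    using simple_closed_path_norm_winding_number_inside[OF c(1)] by fastforce
  moreover have "x \<in> outside (path_image d)"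
  proof -
    have "0 \<le> \<epsilon>"
      using order_trans[OF zero_le_dist near[of 0]] by simp
    then have "x \<notin> closure B"
      using far[of x] by force
    moreover have "path_image d \<union> B \<subseteq> closure B"
      using B(4) closure_subset by (auto simp: frontier_def)
    moreover have "inside (path_image d) \<union> outside (path_image d) = - path_image d"
      using Jordan_inside_outside[OF d] by auto
    ultimately show ?thesis
      using Jordan_domain_eq_inside[OF d B] by blast
  qed
  then have "winding_number d x = 0"
    using winding_number_zero_in_outside d simple_path_imp_path by blast
  moreover have "homotopic_loops (- {x}) c d"
  proof (rule homotopic_loops_linear)
    show "path c" "path d"
      using c d simple_path_imp_path by auto
    show "closed_segment (c s) (d s) \<subseteq> - {x}" if "s \<in> {0..1}" for s
    proof
      fix z assume "z \<in> closed_segment (c s) (d s)"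
      then have "dist z (d s) \<le> dist (c s) (d s)"
        using segment_bound(2) by (simp add: dist_norm norm_minus_commute)
      then have "dist z (d s) \<le> \<epsilon>"
        using near[OF that] by linarith
      then show "z \<in> - {x}"
        using far[OF d_in_B[OF that]] by auto
    qed
  qed (use c d in auto)
  then have "winding_number c x = winding_number d x"
    by (rule winding_number_homotopic_loops)
  ultimately show False
    by simp
qed

text \<open>The Jordan curve theorem and winding numbers are only available for complex-valued
  paths, so planar domains are transported to \<open>\<complex>\<close>.\<close>

definition complex_of_vec2 :: "real^2 \<Rightarrow> complex" where
  "complex_of_vec2 x = Complex (x$1) (x$2)"

lemma linear_complex_of_vec2: "linear complex_of_vec2"
  by (rule linearI) (simp_all add: complex_of_vec2_def complex_eq_iff)

lemma bij_complex_of_vec2: "bij complex_of_vec2"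
proof (rule bijI)
  show "inj complex_of_vec2"
    by (rule injI) (simp add: complex_of_vec2_def vec_eq_iff forall_2 complex_eq_iff)
  have "complex_of_vec2 (vector [Re z, Im z]) = z" for z
    by (simp add: complex_of_vec2_def complex_eq_iff)
  then show "surj complex_of_vec2"
    by (metis surj_def)
qed

lemma dist_complex_of_vec2 [simp]: "dist (complex_of_vec2 x) (complex_of_vec2 y) = dist x y"
  using linear_diff[OF linear_complex_of_vec2, of x y]
  by (simp add: dist_norm complex_of_vec2_def norm_vec_def L2_set_def sum_2 cmod_def)

lemma closure_complex_of_vec2_image:
  "closure (complex_of_vec2 ` S) = complex_of_vec2 ` closure S"
  using closure_injective_linear_image[OF linear_complex_of_vec2 bij_is_inj[OF bij_complex_of_vec2]]
  by simp

lemma frontier_complex_of_vec2_image: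
  "frontier (complex_of_vec2 ` S) = complex_of_vec2 ` frontier S"
  using interior_bijective_linear_image[OF linear_complex_of_vec2 bij_complex_of_vec2]
  by (simp add: frontier_def closure_complex_of_vec2_image
      image_set_diff[OF bij_is_inj[OF bij_complex_of_vec2]])

lemma Jordan_domains_closure_near_vec2:
  fixes p q :: "real \<Rightarrow> real^2"
  assumes p: "simple_path p" "pathfinish p = pathstart p"
    and q: "simple_path q" "pathfinish q = pathstart q"
    and M: "open M" "bounded M" "connected M" "frontier M = path_image p"
    and N: "open N" "bounded N" "connected N" "frontier N = path_image q"
    and near: "\<And>s. s \<in> {0..1} \<Longrightarrow> dist (p s) (q s) \<le> \<epsilon>"
    and x: "x \<in> closure M"
  shows "\<exists>y\<in>closure N. dist x y \<le> \<epsilon>"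
proof -
  let ?\<phi> = complex_of_vec2
  note lin = linear_complex_of_vec2 and bij = bij_complex_of_vec2
  have image_domain: "open (?\<phi> ` S) \<and> bounded (?\<phi> ` S) \<and> connected (?\<phi> ` S)"
    if "open S" "bounded S" "connected S" for S
    using that open_bijective_linear_image_eq[OF lin bij] connected_linear_image[OF lin]
      bounded_linear_image[OF _ linear_conv_bounded_linear[THEN iffD1, OF lin]] by auto
  have simple_loop: "simple_path (?\<phi> \<circ> g) \<and> pathfinish (?\<phi> \<circ> g) = pathstart (?\<phi> \<circ> g)"
    if "simple_path g" "pathfinish g = pathstart g" for g
    using that simple_path_linear_image_eq[OF lin bij_is_inj[OF bij]]
    by (simp add: pathfinish_compose pathstart_compose)
  have "\<exists>y'\<in>closure (?\<phi> ` N). dist (?\<phi> x) y' \<le> \<epsilon>"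
    using Jordan_domains_closure_near[of "?\<phi> \<circ> p" "?\<phi> \<circ> q" "?\<phi> ` M" "?\<phi> ` N" \<epsilon> "?\<phi> x"]
      simple_loop[OF p] simple_loop[OF q] image_domain[OF M(1-3)] image_domain[OF N(1-3)]
      M(4) N(4) near x
    by (simp add: frontier_complex_of_vec2_image closure_complex_of_vec2_image path_image_compose)
  then show ?thesis
    by (auto simp: closure_complex_of_vec2_image)
qed

lemma hausdist_le:
  fixes S T :: "'a::metric_space set"
  assumes "S \<noteq> {}" "T \<noteq> {}"
    and ST: "\<And>x. x \<in> S \<Longrightarrow> \<exists>y\<in>T. dist x y \<le> \<epsilon>"
    and TS: "\<And>y. y \<in> T \<Longrightarrow> \<exists>x\<in>S. dist y x \<le> \<epsilon>"
  shows "\<bar>hausdist S T\<bar> \<le> \<epsilon>"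
proof -
  have S_le: "infdist x T \<le> \<epsilon>" if "x \<in> S" for x
    using ST[OF that] infdist_le order_trans by blast
  have T_le: "infdist y S \<le> \<epsilon>" if "y \<in> T" for y
    using TS[OF that] infdist_le order_trans by blast
  obtain x0 where "x0 \<in> S"
    using assms(1) by blast
  have "bdd_above ((\<lambda>x. infdist x T) ` S)"
    using S_le by (intro bdd_aboveI2) auto
  then have "infdist x0 T \<le> (SUP x\<in>S. infdist x T)"
    by (rule cSUP_upper[OF \<open>x0 \<in> S\<close>])
  then have "0 \<le> (SUP x\<in>S. infdist x T)"
    using infdist_nonneg order_trans by blast
  moreover have "(SUP x\<in>S. infdist x T) \<le> \<epsilon>" "(SUP y\<in>T. infdist y S) \<le> \<epsilon>"
    using S_le T_le assms(1,2) by (auto intro: cSUP_least)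
  ultimately show ?thesis
    unfolding hausdist_def by auto
qed

lemma hausdist_Jordan_domains_le:
  fixes p q :: "real \<Rightarrow> real^2"
  assumes p: "simple_path p" "pathfinish p = pathstart p"
    and q: "simple_path q" "pathfinish q = pathstart q"
    and M: "open M" "bounded M" "connected M" "frontier M = path_image p"
    and N: "open N" "bounded N" "connected N" "frontier N = path_image q"
    and near: "\<And>s. s \<in> {0..1} \<Longrightarrow> dist (p s) (q s) \<le> \<epsilon>"
  shows "\<bar>hausdist (closure M) (closure N)\<bar> \<le> \<epsilon>"
proof (rule hausdist_le)
  have "frontier S \<noteq> {}" if "frontier S = path_image g" for S :: "(real^2) set" and g
    using that by (auto simp: path_image_def)
  then show "closure M \<noteq> {}" "closure N \<noteq> {}"
    using M(4) N(4) by (auto simp: frontier_def)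
  show "\<exists>y\<in>closure N. dist x y \<le> \<epsilon>" if "x \<in> closure M" for x
    using Jordan_domains_closure_near_vec2[OF p q M N near that] .
  show "\<exists>x\<in>closure M. dist y x \<le> \<epsilon>" if "y \<in> closure N" for y
    using Jordan_domains_closure_near_vec2[OF q p N M _ that] near by (simp add: dist_commute)
qed

theorem mainTheorem5:
  fixes M :: "real \<Rightarrow> (real^2) set"
    and rho :: "real \<Rightarrow> real^2 \<Rightarrow> real"
    and v :: "real \<Rightarrow> real^2 \<Rightarrow> real^2"
    and r :: "real \<Rightarrow> real \<Rightarrow> real^2"
    and rstar :: "real \<Rightarrow> real^2"
    and Mstar :: "(real^2) set"
  assumes dom: "\<And>t. t \<ge> 0 \<Longrightarrow> open (M t) \<and> bounded (M t) \<and> simply_connected (M t)"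
    and bdry: "\<And>t. t \<ge> 0 \<Longrightarrow> simple_path (r t) \<and> pathfinish (r t) = pathstart (r t)
                  \<and> path_image (r t) = frontier (M t)"
    and target: "open Mstar \<and> bounded Mstar \<and> simply_connected Mstar"
    and target_bdry: "simple_path rstar \<and> pathfinish rstar = pathstart rstar
                  \<and> path_image rstar = frontier Mstar"
    and init_smooth: "smooth_curve (r 0) \<and> (\<forall>\<gamma>. r 0 (\<gamma> + 1) = r 0 \<gamma>)"
    and rho_pos: "\<And>t x. t \<ge> 0 \<Longrightarrow> x \<in> closure (M t) \<Longrightarrow> rho t x > 0"
    and rho_supp: "\<And>t x. t \<ge> 0 \<Longrightarrow> x \<notin> closure (M t) \<Longrightarrow> rho t x = 0"
    and rho_mass: "\<And>t. t \<ge> 0 \<Longrightarrow> (rho t has_integral 1) (M t)"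
    and rho_smooth: "\<And>t x. t \<ge> 0 \<Longrightarrow> x \<in> M t \<Longrightarrow>
                  rho t differentiable (at x) \<and> (\<lambda>y. rho t y *\<^sub>R v t y) differentiable (at x)"
    and continuity_eq: "\<And>t x. t > 0 \<Longrightarrow> x \<in> M t \<Longrightarrow>
                  ((\<lambda>s. rho s x) has_real_derivative
                     - divergence (\<lambda>y. rho t y *\<^sub>R v t y) x) (at t)"
    and control_interior: "\<And>t x. t \<ge> 0 \<Longrightarrow> x \<in> M t \<Longrightarrow>
                  v t x = - ((1 / rho t x) *\<^sub>R grad (rho t) x)"
    and boundary_kin: "\<And>t \<gamma>. t \<ge> 0 \<Longrightarrow> \<gamma> \<in> {0..1} \<Longrightarrow>
                  ((\<lambda>s. r s \<gamma>) has_vector_derivative v t (r t \<gamma>)) (at t within {0..})"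
    and control_boundary: "\<And>t \<gamma>. t \<ge> 0 \<Longrightarrow> \<gamma> \<in> {0..1} \<Longrightarrow>
                  ((\<lambda>s. v s (r s \<gamma>)) has_vector_derivative
                     (- (r t \<gamma> - rstar \<gamma>) - v t (r t \<gamma>))) (at t within {0..})"
    and rho_H1: "\<exists>B. \<forall>t\<ge>0. H1_bounded_on (M t) (rho t) B"
    and v_H1: "\<exists>B. \<forall>t\<ge>0. H1_bounded_on (M t) (v t) B"
    and vb_H1: "\<exists>B. \<forall>t\<ge>0. H1_bounded_on {0<..<1} (\<lambda>\<gamma>. v t (r t \<gamma>)) B"
  shows "((\<lambda>t. hausdist (closure (M t)) (closure Mstar)) \<longlongrightarrow> 0) at_top"
  proof -
  have path0: "path (r 0)" "path rstar"
    using bdry[of 0] target_bdry simple_path_imp_path by auto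
  obtain B where "H1_bounded_on {0<..<1} (\<lambda>\<gamma>. v 0 (r 0 \<gamma>)) B"
    using vb_H1 by auto
  then have "bounded ((\<lambda>\<gamma>. v 0 (r 0 \<gamma>)) ` {0<..<1})"
    by (rule H1_bounded_on_interval_imp_bounded)
  moreover have "{0..1} = insert 0 (insert 1 {0<..<1::real})"
    by auto
  ultimately have v0: "bounded ((\<lambda>\<gamma>. v 0 (r 0 \<gamma>)) ` {0..1})"
    by simp
  have e0: "bounded ((\<lambda>\<gamma>. r 0 \<gamma> - rstar \<gamma>) ` {0..1})"
    using path0 unfolding path_def
    by (intro compact_imp_bounded compact_continuous_image continuous_on_diff) auto
  obtain \<epsilon> where \<epsilon>: "(\<epsilon> \<longlongrightarrow> 0) at_top"
    and near: "\<And>t \<gamma>. t \<ge> 0 \<Longrightarrow> \<gamma> \<in> {0..1} \<Longrightarrow> dist (r t \<gamma>) (rstar \<gamma>) \<le> \<epsilon> t"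
    using damped_tracking_uniform_convergence[where u = "\<lambda>t \<gamma>. v t (r t \<gamma>)",
        OF boundary_kin control_boundary e0 v0] by blast
  have "\<bar>hausdist (closure (M t)) (closure Mstar)\<bar> \<le> \<epsilon> t" if "t \<ge> 0" for t
    using hausdist_Jordan_domains_le[of "r t" rstar "M t" Mstar] near[OF that]
      bdry[OF that] dom[OF that] target_bdry target simply_connected_imp_connected by auto
  then show ?thesis
    by (intro Lim_null_comparison[OF eventually_mono[OF eventually_ge_at_top[of 0]] \<epsilon>]) auto
qed

end
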